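(* Let $T>0$. The map $G$ defined by $G(X)_t=\tau_tX_t$, $t\in[0,T]$, is continuous from $\mathcal{C}([0,T],\mathcal{S}')$ into itself.
   Context: $\mathcal{S}$ is the Schwartz space on $\mathbb{R}$ (smooth functions with the topology of the semi-norms $\sup_x|x^\beta\phi^{(\gamma)}(x)|$), $\mathcal{S}'$ its dual, the space of tempered distributions, with duality $\langle\mu,\phi\rangle$. For $x\in\mathbb{R}$ and $\mu\in\mathcal{S}'$, $\tau_x\mu$ is the tempered distribution with $\langle\tau_x\mu,\phi\rangle=\langle\mu,\tau_x\phi\rangle$, where $\tau_x\phi(\cdot)=\phi(\cdot-x)$. A path $X:[0,T]\to\mathcal{S}'$ belongs to $\mathcal{C}([0,T],\mathcal{S}')$ (resp. $\mathcal{D}([0,T],\mathcal{S}')$) iff $t\mapsto\langle X_t,\phi\rangle$ is continuous (resp. right-continuous with left limits) for every $\phi\in\mathcal{S}$; these spaces carry their usual (uniform, resp. Skorokhod) topologies. *)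

theory Defs
  imports "HOL-Analysis.Analysis"
begin

type_synonym test = "real \<Rightarrow> real"
type_synonym distr = "test \<Rightarrow> real"

definition smooth :: "test \<Rightarrow> bool" where
  "smooth f \<longleftrightarrow> (\<forall>k x. ((deriv ^^ k) f) differentiable (at x))"

definition schwartz :: "test set" where
  "schwartz = {f. smooth f \<and>
     (\<forall>\<beta> \<gamma>. \<exists>C. \<forall>x. \<bar>x ^ \<beta> * (deriv ^^ \<gamma>) f x\<bar> \<le> C)}"

definition schwartz_bounded :: "test set \<Rightarrow> bool" where
  "schwartz_bounded B \<longleftrightarrow> B \<subseteq> schwartz \<and>
     (\<forall>\<beta> \<gamma>. \<exists>C. \<forall>\<phi>\<in>B. \<forall>x. \<bar>x ^ \<beta> * (deriv ^^ \<gamma>) \<phi> x\<bar> \<le> C)"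

text \<open>Tempered distributions: linear functionals on the Schwartz space that are continuous,
  i.e. dominated by a constant times the maximum of finitely many semi-norms.\<close>
definition tempered :: "distr \<Rightarrow> bool" where
  "tempered \<mu> \<longleftrightarrow>
     (\<forall>\<phi>\<in>schwartz. \<forall>\<psi>\<in>schwartz. \<forall>a b. \<mu> (\<lambda>x. a * \<phi> x + b * \<psi> x) = a * \<mu> \<phi> + b * \<mu> \<psi>) \<and>
     (\<exists>C N. \<forall>\<phi>\<in>schwartz. \<forall>M.
        (\<forall>\<beta>\<le>N. \<forall>\<gamma>\<le>N. \<forall>x. \<bar>x ^ \<beta> * (deriv ^^ \<gamma>) \<phi> x\<bar> \<le> M) \<longrightarrow> \<bar>\<mu> \<phi>\<bar> \<le> C * M)"

definition transl_fun :: "real \<Rightarrow> test \<Rightarrow> test" where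
  "transl_fun a \<phi> = (\<lambda>y. \<phi> (y - a))"

definition transl :: "real \<Rightarrow> distr \<Rightarrow> distr" where
  "transl a \<mu> = (\<lambda>\<phi>. \<mu> (transl_fun a \<phi>))"

text \<open>Continuous paths [0,T] -> S' (weakly continuous, equivalently strongly continuous).\<close>
definition pathsC :: "real \<Rightarrow> (real \<Rightarrow> distr) set" where
  "pathsC T = {X. (\<forall>t\<in>{0..T}. tempered (X t)) \<and>
                  (\<forall>\<phi>\<in>schwartz. continuous_on {0..T} (\<lambda>t. X t \<phi>))}"

definition pathball :: "real \<Rightarrow> (real \<Rightarrow> distr) \<Rightarrow> test set \<Rightarrow> real \<Rightarrow> (real \<Rightarrow> distr) set" where
  "pathball T X B \<epsilon> = {Y \<in> pathsC T. \<exists>e<\<epsilon>. \<forall>t\<in>{0..T}. \<forall>\<phi>\<in>B. \<bar>Y t \<phi> - X t \<phi>\<bar> \<le> e}"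

text \<open>The usual topology of uniform convergence on [0,T] for the strong topology of S'.\<close>
definition pathsC_topology :: "real \<Rightarrow> (real \<Rightarrow> distr) topology" where
  "pathsC_topology T = topology_generated_by
     {pathball T X B \<epsilon> | X B \<epsilon>. X \<in> pathsC T \<and> schwartz_bounded B \<and> \<epsilon> > 0}"

definition Gmap :: "(real \<Rightarrow> distr) \<Rightarrow> (real \<Rightarrow> distr)" where
  "Gmap X = (\<lambda>t. transl t (X t))"

end

theory Submission
  imports Defs
begin

text \<open>Continuity of \<open>G\<close> is elementary: the seminorm \<open>sup |\<langle>G(Z)_t - G(Y)_t, \<phi>\<rangle>|\<close> over
  \<open>t \<in> [0,T]\<close>, \<open>\<phi> \<in> B\<close> is the seminorm of \<open>Z - Y\<close> over the translates \<open>\<tau>_t \<phi>\<close>, and these again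
  form a bounded set. The real content is that \<open>G\<close> maps continuous paths to continuous paths. Write
  \<open>\<langle>X_s, \<tau>_s \<phi>\<rangle> - \<langle>X_t, \<tau>_t \<phi>\<rangle> = \<langle>X_s, \<tau>_s \<phi> - \<tau>_t \<phi>\<rangle> + \<langle>X_s - X_t, \<tau>_t \<phi>\<rangle>\<close>; the second term
  tends to 0 by weak continuity. The family \<open>{X_s : s \<in> [0,T]}\<close> is pointwise bounded, hence
  equicontinuous by the uniform boundedness principle (proved by a gliding hump), and
  \<open>\<tau>_s \<phi> - \<tau>_t \<phi> = O(|s - t|)\<close> in every Schwartz seminorm by the mean value theorem, so the first
  term tends to 0 as well.\<close>

section \<open>Higher derivatives\<close>

lemma higher_deriv_chain:
  assumes "D 0 = f" and "\<And>k x. (D k has_real_derivative D (Suc k) x) (at x)"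
  shows "(deriv ^^ k) f = D k"
proof (induction k)
  case 0
  show ?case using assms(1) by simp
next
  case (Suc k)
  have "deriv (D k) = D (Suc k)" by (intro ext DERIV_imp_deriv assms(2))
  then show ?case using Suc.IH by simp
qed

lemma smooth_chain:
  assumes "D 0 = f" and "\<And>k x. (D k has_real_derivative D (Suc k) x) (at x)"
  shows "smooth f"
  unfolding smooth_def higher_deriv_chain[OF assms] using assms(2)
  by (auto simp: real_differentiable_def)

lemma smooth_has_real_derivative:
  "smooth f \<Longrightarrow> ((deriv ^^ k) f has_real_derivative (deriv ^^ Suc k) f x) (at x)"
  unfolding smooth_def by (simp add: DERIV_deriv_iff_real_differentiable)

lemma
  assumes "smooth f"
  shows higher_deriv_transl: "(deriv ^^ k) (transl_fun a f) = transl_fun a ((deriv ^^ k) f)"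
    and smooth_transl: "smooth (transl_fun a f)"
proof -
  have "(transl_fun a ((deriv ^^ k) f) has_real_derivative transl_fun a ((deriv ^^ Suc k) f) x) (at x)"
    for k x
    using smooth_has_real_derivative[OF assms, of k "x + - a"] DERIV_shift[of _ _ x "- a"]
    unfolding transl_fun_def by simp
  then show "(deriv ^^ k) (transl_fun a f) = transl_fun a ((deriv ^^ k) f)"
    and "smooth (transl_fun a f)"
    by (intro higher_deriv_chain[where D = "\<lambda>k. transl_fun a ((deriv ^^ k) f)"]
        smooth_chain[where D = "\<lambda>k. transl_fun a ((deriv ^^ k) f)"]; simp)+
qed

lemma
  assumes "smooth f" and "smooth g"
  shows higher_deriv_lincomb:
      "(deriv ^^ k) (\<lambda>x. a * f x + b * g x) = (\<lambda>x. a * (deriv ^^ k) f x + b * (deriv ^^ k) g x)"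
    and smooth_lincomb: "smooth (\<lambda>x. a * f x + b * g x)"
proof -
  have "((\<lambda>x. a * (deriv ^^ k) f x + b * (deriv ^^ k) g x) has_real_derivative
          a * (deriv ^^ Suc k) f x + b * (deriv ^^ Suc k) g x) (at x)" for k x
    by (intro DERIV_add DERIV_cmult smooth_has_real_derivative assms)
  then show "(deriv ^^ k) (\<lambda>x. a * f x + b * g x) = (\<lambda>x. a * (deriv ^^ k) f x + b * (deriv ^^ k) g x)"
    and "smooth (\<lambda>x. a * f x + b * g x)"
    by (intro higher_deriv_chain[where D = "\<lambda>k x. a * (deriv ^^ k) f x + b * (deriv ^^ k) g x"]
        smooth_chain[where D = "\<lambda>k x. a * (deriv ^^ k) f x + b * (deriv ^^ k) g x"]; simp)+
qed

section \<open>Schwartz seminorms and translations\<close>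

definition seminorms_le :: "nat \<Rightarrow> test \<Rightarrow> real \<Rightarrow> bool" where
  "seminorms_le N \<phi> M \<longleftrightarrow> (\<forall>\<beta>\<le>N. \<forall>\<gamma>\<le>N. \<forall>x. \<bar>x ^ \<beta> * (deriv ^^ \<gamma>) \<phi> x\<bar> \<le> M)"

lemma seminorms_leD: "seminorms_le N \<phi> M \<Longrightarrow> \<beta> \<le> N \<Longrightarrow> \<gamma> \<le> N \<Longrightarrow> \<bar>x ^ \<beta> * (deriv ^^ \<gamma>) \<phi> x\<bar> \<le> M"
  unfolding seminorms_le_def by blast

lemma seminorms_le_nonneg: "seminorms_le N \<phi> M \<Longrightarrow> 0 \<le> M"
  using seminorms_leD[of N \<phi> M 0 0 0] by simp

lemma seminorms_le_mono: "seminorms_le N \<phi> M \<Longrightarrow> N' \<le> N \<Longrightarrow> M \<le> M' \<Longrightarrow> seminorms_le N' \<phi> M'"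
  unfolding seminorms_le_def by (meson order_trans)

lemma seminorms_le_0_imp_zero: "seminorms_le N \<phi> 0 \<Longrightarrow> \<phi> = (\<lambda>x. 0)"
  using seminorms_leD[of N \<phi> 0 0 0] by fastforce

lemma ex_seminorms_le_iff:
  "(\<forall>N. \<exists>M. \<forall>\<phi>\<in>B. seminorms_le N \<phi> M) \<longleftrightarrow>
   (\<forall>\<beta> \<gamma>. \<exists>C. \<forall>\<phi>\<in>B. \<forall>x. \<bar>x ^ \<beta> * (deriv ^^ \<gamma>) \<phi> x\<bar> \<le> C)"
proof
  assume "\<forall>N. \<exists>M. \<forall>\<phi>\<in>B. seminorms_le N \<phi> M"
  then show "\<forall>\<beta> \<gamma>. \<exists>C. \<forall>\<phi>\<in>B. \<forall>x. \<bar>x ^ \<beta> * (deriv ^^ \<gamma>) \<phi> x\<bar> \<le> C"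
    by (metis le_add1 le_add2 seminorms_leD)
next
  assume "\<forall>\<beta> \<gamma>. \<exists>C. \<forall>\<phi>\<in>B. \<forall>x. \<bar>x ^ \<beta> * (deriv ^^ \<gamma>) \<phi> x\<bar> \<le> C"
  then obtain C where C: "\<And>\<beta> \<gamma> \<phi> x. \<phi> \<in> B \<Longrightarrow> \<bar>x ^ \<beta> * (deriv ^^ \<gamma>) \<phi> x\<bar> \<le> C \<beta> \<gamma>"
    by metis
  have "\<forall>\<phi>\<in>B. seminorms_le N \<phi> (\<Sum>(\<beta>, \<gamma>)\<in>{..N} \<times> {..N}. \<bar>C \<beta> \<gamma>\<bar>)" for N
    unfolding seminorms_le_def
  proof (intro ballI allI impI)
    fix \<phi> \<beta> \<gamma> x assume "\<phi> \<in> B" "\<beta> \<le> N" "\<gamma> \<le> N"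
    then have "\<bar>C \<beta> \<gamma>\<bar> \<le> (\<Sum>(\<beta>, \<gamma>)\<in>{..N} \<times> {..N}. \<bar>C \<beta> \<gamma>\<bar>)"
      using member_le_sum[of "(\<beta>, \<gamma>)" "{..N} \<times> {..N}" "\<lambda>(\<beta>, \<gamma>). \<bar>C \<beta> \<gamma>\<bar>"] by auto
    then show "\<bar>x ^ \<beta> * (deriv ^^ \<gamma>) \<phi> x\<bar> \<le> (\<Sum>(\<beta>, \<gamma>)\<in>{..N} \<times> {..N}. \<bar>C \<beta> \<gamma>\<bar>)"
      using C[OF \<open>\<phi> \<in> B\<close>, of x \<beta> \<gamma>] by linarith
  qed
  then show "\<forall>N. \<exists>M. \<forall>\<phi>\<in>B. seminorms_le N \<phi> M" by blast
qed

lemma schwartz_iff_seminorms_le: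
  "\<phi> \<in> schwartz \<longleftrightarrow> smooth \<phi> \<and> (\<forall>N. \<exists>M. seminorms_le N \<phi> M)"
  using ex_seminorms_le_iff[of "{\<phi>}"] unfolding schwartz_def by simp

lemma schwartz_bounded_iff_seminorms_le:
  "schwartz_bounded B \<longleftrightarrow> B \<subseteq> schwartz \<and> (\<forall>N. \<exists>M. \<forall>\<phi>\<in>B. seminorms_le N \<phi> M)"
  using ex_seminorms_le_iff[of B] unfolding schwartz_bounded_def by blast

lemma seminorms_le_lincomb:
  assumes "smooth f" "smooth g" "seminorms_le N f M1" "seminorms_le N g M2"
  shows "seminorms_le N (\<lambda>x. a * f x + b * g x) (\<bar>a\<bar> * M1 + \<bar>b\<bar> * M2)"
  unfolding seminorms_le_def
proof (intro allI impI)
  fix \<beta> \<gamma> x assume "\<beta> \<le> N" "\<gamma> \<le> N"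
  have "\<bar>x ^ \<beta> * (deriv ^^ \<gamma>) (\<lambda>x. a * f x + b * g x) x\<bar>
      = \<bar>a * (x ^ \<beta> * (deriv ^^ \<gamma>) f x) + b * (x ^ \<beta> * (deriv ^^ \<gamma>) g x)\<bar>"
    by (simp add: higher_deriv_lincomb[OF assms(1,2)] algebra_simps)
  also have "\<dots> \<le> \<bar>a\<bar> * \<bar>x ^ \<beta> * (deriv ^^ \<gamma>) f x\<bar> + \<bar>b\<bar> * \<bar>x ^ \<beta> * (deriv ^^ \<gamma>) g x\<bar>"
    by (metis abs_mult abs_triangle_ineq)
  also have "\<dots> \<le> \<bar>a\<bar> * M1 + \<bar>b\<bar> * M2"
    using assms(3,4) \<open>\<beta> \<le> N\<close> \<open>\<gamma> \<le> N\<close> by (intro add_mono mult_left_mono seminorms_leD) auto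
  finally show "\<bar>x ^ \<beta> * (deriv ^^ \<gamma>) (\<lambda>x. a * f x + b * g x) x\<bar> \<le> \<bar>a\<bar> * M1 + \<bar>b\<bar> * M2" .
qed

lemma abs_power_le_shift:
  fixes x y :: real
  shows "\<bar>x\<bar> ^ n \<le> (1 + \<bar>x - y\<bar>) ^ n * (max 1 \<bar>y\<bar>) ^ n"
proof -
  have "\<bar>x\<bar> \<le> max 1 \<bar>y\<bar> + \<bar>x - y\<bar> * max 1 \<bar>y\<bar>"
    by (smt (verit, best) mult_le_cancel_left1)
  also have "\<dots> = (1 + \<bar>x - y\<bar>) * max 1 \<bar>y\<bar>" by (simp add: algebra_simps)
  finally show ?thesis by (metis abs_ge_zero power_mono power_mult_distrib)
qed

text \<open>Peetre's inequality, in seminorm form.\<close>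
lemma seminorms_le_weight_shift:
  assumes "seminorms_le N \<phi> M" "\<beta> \<le> N" "\<gamma> \<le> N"
  shows "\<bar>x ^ \<beta> * (deriv ^^ \<gamma>) \<phi> z\<bar> \<le> (1 + \<bar>x - z\<bar>) ^ \<beta> * M"
proof -
  define g where "g = \<bar>(deriv ^^ \<gamma>) \<phi> z\<bar>"
  have "(max 1 \<bar>z\<bar>) ^ \<beta> * g \<le> M"
    using seminorms_leD[OF assms(1) _ assms(3), of 0 z] seminorms_leD[OF assms, of z]
    by (cases "\<bar>z\<bar> \<le> 1") (auto simp: g_def abs_mult power_abs max_def)
  then have "(1 + \<bar>x - z\<bar>) ^ \<beta> * ((max 1 \<bar>z\<bar>) ^ \<beta> * g) \<le> (1 + \<bar>x - z\<bar>) ^ \<beta> * M"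
    by (intro mult_left_mono) auto
  moreover have "\<bar>x\<bar> ^ \<beta> * g \<le> (1 + \<bar>x - z\<bar>) ^ \<beta> * (max 1 \<bar>z\<bar>) ^ \<beta> * g"
    using abs_power_le_shift by (intro mult_right_mono) (auto simp: g_def)
  ultimately have "\<bar>x\<bar> ^ \<beta> * g \<le> (1 + \<bar>x - z\<bar>) ^ \<beta> * M" by (metis mult.assoc order_trans)
  then show ?thesis by (simp add: g_def abs_mult power_abs)
qed

lemma seminorms_le_transl:
  assumes "smooth \<phi>" "seminorms_le N \<phi> M" "\<bar>a\<bar> \<le> r"
  shows "seminorms_le N (transl_fun a \<phi>) ((1 + r) ^ N * M)"
  unfolding seminorms_le_def
proof (intro allI impI)
  fix \<beta> \<gamma> x assume "\<beta> \<le> N" "\<gamma> \<le> N"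
  have "\<bar>x ^ \<beta> * (deriv ^^ \<gamma>) (transl_fun a \<phi>) x\<bar> = \<bar>x ^ \<beta> * (deriv ^^ \<gamma>) \<phi> (x - a)\<bar>"
    unfolding higher_deriv_transl[OF assms(1)] by (simp add: transl_fun_def)
  also have "\<dots> \<le> (1 + \<bar>a\<bar>) ^ \<beta> * M"
    using seminorms_le_weight_shift[OF assms(2) \<open>\<beta> \<le> N\<close> \<open>\<gamma> \<le> N\<close>, of x "x - a"] by simp
  also have "\<dots> \<le> (1 + r) ^ N * M"
    using assms(3) \<open>\<beta> \<le> N\<close> seminorms_le_nonneg[OF assms(2)]
    by (intro mult_right_mono order_trans[OF power_mono power_increasing]) auto
  finally show "\<bar>x ^ \<beta> * (deriv ^^ \<gamma>) (transl_fun a \<phi>) x\<bar> \<le> (1 + r) ^ N * M" .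
qed

lemma MVT_unordered:
  assumes "\<And>z. (g has_real_derivative g' z) (at z)"
  shows "\<exists>z. \<bar>z - u\<bar> \<le> \<bar>v - u\<bar> \<and> g v - g u = (v - u) * g' z"
proof (cases u v rule: linorder_cases)
  case less
  then show ?thesis using MVT2[OF less, of g g'] assms by force
next
  case greater
  then obtain z where "v < z" "z < u" "g u - g v = (u - v) * g' z"
    using MVT2[OF greater, of g g'] assms by blast
  then show ?thesis by (intro exI[of _ z]) (auto simp: algebra_simps)
qed auto

lemma seminorms_le_transl_diff:
  assumes "smooth \<phi>" "seminorms_le (Suc N) \<phi> M" "\<bar>a - b\<bar> \<le> 1"
  shows "seminorms_le N (\<lambda>x. transl_fun a \<phi> x - transl_fun b \<phi> x) (\<bar>a - b\<bar> * ((2 + \<bar>b\<bar>) ^ N * M))"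
  unfolding seminorms_le_def
proof (intro allI impI)
  fix \<beta> \<gamma> x assume "\<beta> \<le> N" "\<gamma> \<le> N"
  have diff_lincomb: "(\<lambda>x. transl_fun a \<phi> x - transl_fun b \<phi> x)
      = (\<lambda>x. 1 * transl_fun a \<phi> x + (- 1) * transl_fun b \<phi> x)"
    by simp
  have diff: "(deriv ^^ \<gamma>) (\<lambda>x. transl_fun a \<phi> x - transl_fun b \<phi> x) x
      = (deriv ^^ \<gamma>) \<phi> (x - a) - (deriv ^^ \<gamma>) \<phi> (x - b)"
    unfolding diff_lincomb higher_deriv_lincomb[OF smooth_transl[OF assms(1)] smooth_transl[OF assms(1)]]
      higher_deriv_transl[OF assms(1)] by (simp add: transl_fun_def)
  obtain z where z: "\<bar>z - (x - b)\<bar> \<le> \<bar>a - b\<bar>"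
    and mvt: "(deriv ^^ \<gamma>) \<phi> (x - a) - (deriv ^^ \<gamma>) \<phi> (x - b) = (b - a) * (deriv ^^ Suc \<gamma>) \<phi> z"
    using MVT_unordered[OF smooth_has_real_derivative[OF assms(1)], of "x - b" "x - a"]
    by (auto simp: abs_minus_commute)
  have "\<bar>x ^ \<beta> * (deriv ^^ Suc \<gamma>) \<phi> z\<bar> \<le> (1 + \<bar>x - z\<bar>) ^ \<beta> * M"
    using \<open>\<beta> \<le> N\<close> \<open>\<gamma> \<le> N\<close> by (intro seminorms_le_weight_shift[OF assms(2)]) auto
  also have "\<dots> \<le> (2 + \<bar>b\<bar>) ^ N * M"
    using z assms(3) \<open>\<beta> \<le> N\<close> seminorms_le_nonneg[OF assms(2)]
    by (intro mult_right_mono order_trans[OF power_mono power_increasing]) auto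
  finally have "\<bar>a - b\<bar> * \<bar>x ^ \<beta> * (deriv ^^ Suc \<gamma>) \<phi> z\<bar> \<le> \<bar>a - b\<bar> * ((2 + \<bar>b\<bar>) ^ N * M)"
    by (rule mult_left_mono) simp
  then show "\<bar>x ^ \<beta> * (deriv ^^ \<gamma>) (\<lambda>x. transl_fun a \<phi> x - transl_fun b \<phi> x) x\<bar>
      \<le> \<bar>a - b\<bar> * ((2 + \<bar>b\<bar>) ^ N * M)"
    unfolding diff mvt by (simp add: abs_mult abs_minus_commute mult.left_commute)
qed

lemma schwartz_lincomb:
  assumes "f \<in> schwartz" "g \<in> schwartz"
  shows "(\<lambda>x. a * f x + b * g x) \<in> schwartz"
  using assms smooth_lincomb seminorms_le_lincomb unfolding schwartz_iff_seminorms_le by metis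

lemma schwartz_transl: "\<phi> \<in> schwartz \<Longrightarrow> transl_fun a \<phi> \<in> schwartz"
  using smooth_transl seminorms_le_transl[OF _ _ order_refl] unfolding schwartz_iff_seminorms_le by metis

lemma schwartz_zero: "(\<lambda>x. 0) \<in> schwartz"
  unfolding schwartz_iff_seminorms_le seminorms_le_def
  using smooth_chain[where D = "\<lambda>k x. 0" and f = "\<lambda>x. 0"] higher_deriv_chain[where D = "\<lambda>k x. 0" and f = "\<lambda>x. 0"]
  by auto

lemma schwartz_sum:
  fixes k :: nat
  shows "(\<And>i. i < k \<Longrightarrow> \<eta> i \<in> schwartz) \<Longrightarrow> (\<lambda>x. \<Sum>i<k. \<eta> i x) \<in> schwartz"
proof (induction k)
  case (Suc k)
  then show ?case using schwartz_lincomb[of "\<lambda>x. \<Sum>i<k. \<eta> i x" "\<eta> k" 1 1] by simp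
qed (simp add: schwartz_zero)

lemma schwartz_bounded_transl:
  assumes "bounded A" "schwartz_bounded B"
  shows "schwartz_bounded (\<Union>a\<in>A. transl_fun a ` B)"
proof -
  obtain r where r: "\<And>a. a \<in> A \<Longrightarrow> \<bar>a\<bar> \<le> r" using assms(1) unfolding bounded_real by blast
  have "\<exists>M. \<forall>\<psi>\<in>(\<Union>a\<in>A. transl_fun a ` B). seminorms_le N \<psi> M" for N
  proof -
    obtain M where M: "\<And>\<phi>. \<phi> \<in> B \<Longrightarrow> seminorms_le N \<phi> M"
      using assms(2) unfolding schwartz_bounded_iff_seminorms_le by blast
    have "seminorms_le N (transl_fun a \<phi>) ((1 + r) ^ N * M)" if "a \<in> A" "\<phi> \<in> B" for a \<phi>
      using assms(2) that by (intro seminorms_le_transl M r) (auto simp: schwartz_bounded_def schwartz_def)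
    then show ?thesis by blast
  qed
  then show ?thesis
    using assms(2) schwartz_transl unfolding schwartz_bounded_iff_seminorms_le by blast
qed

section \<open>Series of Schwartz functions\<close>

lemma summable_half_powers: "summable (\<lambda>i. c * (1/2::real) ^ i)" "(\<Sum>i. c * (1/2::real) ^ i) = 2 * c"
  using summable_mult[OF summable_geometric, of "1/2::real" c] suminf_mult[OF summable_geometric, of "1/2::real" c]
    suminf_geometric[of "1/2::real"]
  by simp_all

lemma summable_seminorms_le:
  assumes "\<And>i. seminorms_le (n + i) (\<eta> i) (c * (1/2) ^ i)"
  shows "summable (\<lambda>i. (deriv ^^ k) (\<eta> i) x)"
proof (rule summable_comparison_test'[OF summable_half_powers(1), of k])
  fix i assume "k \<le> i"
  then show "norm ((deriv ^^ k) (\<eta> i) x) \<le> c * (1/2) ^ i"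
    using seminorms_leD[OF assms, of 0 i k x] by simp
qed

lemma
  fixes \<eta> :: "nat \<Rightarrow> test"
  assumes smooth: "\<And>i. smooth (\<eta> i)" and bound: "\<And>i. seminorms_le (n + i) (\<eta> i) (c * (1/2) ^ i)"
  shows smooth_suminf: "smooth (\<lambda>x. \<Sum>i. \<eta> i x)"
    and seminorms_le_suminf: "seminorms_le n (\<lambda>x. \<Sum>i. \<eta> i x) (2 * c)"
proof -
  define D where "D k x = (\<Sum>i. (deriv ^^ k) (\<eta> i) x)" for k x
  have D_deriv: "(D k has_real_derivative D (Suc k) x) (at x)" for k x
  proof -
    have "uniformly_convergent_on UNIV (\<lambda>m x. \<Sum>i<m. (deriv ^^ Suc k) (\<eta> i) x)"
    proof (rule Weierstrass_m_test'_ev[OF eventually_sequentiallyI[of "Suc k"] summable_half_powers(1)])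
      fix i assume "Suc k \<le> i"
      then show "\<forall>x\<in>UNIV. norm ((deriv ^^ Suc k) (\<eta> i) x) \<le> c * (1/2) ^ i"
        using seminorms_leD[OF bound, of 0 i "Suc k"] by simp
    qed
    then show ?thesis
      unfolding D_def
      by (intro has_field_derivative_series'(2)[of UNIV _ _ 0] summable_seminorms_le[OF bound]
          smooth_has_real_derivative[OF smooth]) auto
  qed
  have D0: "D 0 = (\<lambda>x. \<Sum>i. \<eta> i x)" by (rule ext) (simp add: D_def)
  show "smooth (\<lambda>x. \<Sum>i. \<eta> i x)" using smooth_chain[OF D0 D_deriv] .
  have derivs: "(deriv ^^ k) (\<lambda>x. \<Sum>i. \<eta> i x) = D k" for k
    using higher_deriv_chain[OF D0 D_deriv] .
  show "seminorms_le n (\<lambda>x. \<Sum>i. \<eta> i x) (2 * c)"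
    unfolding seminorms_le_def derivs
  proof (intro allI impI)
    fix \<beta> \<gamma> x assume "\<beta> \<le> n" "\<gamma> \<le> n"
    have "x ^ \<beta> * D \<gamma> x = (\<Sum>i. x ^ \<beta> * (deriv ^^ \<gamma>) (\<eta> i) x)"
      unfolding D_def using suminf_mult[OF summable_seminorms_le[OF bound]] by simp
    also have "\<bar>\<dots>\<bar> \<le> (\<Sum>i. c * (1/2) ^ i)"
      using norm_suminf_le[OF _ summable_half_powers(1)] seminorms_leD[OF bound] \<open>\<beta> \<le> n\<close> \<open>\<gamma> \<le> n\<close>
      by (metis real_norm_def trans_le_add1)
    finally show "\<bar>x ^ \<beta> * D \<gamma> x\<bar> \<le> 2 * c" by (simp add: summable_half_powers(2))
  qed
qed

text \<open>The unit coefficients match the shape of \<open>seminorms_le_lincomb\<close> and \<open>tempered_lincomb\<close>.\<close>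
lemma suminf_fun_split_initial_segment:
  assumes "\<And>i. seminorms_le (n + i) (\<eta> i) (c * (1/2) ^ i)"
  shows "(\<lambda>x. \<Sum>i. \<eta> i x) = (\<lambda>x. 1 * (\<Sum>i<k. \<eta> i x) + 1 * (\<Sum>i. \<eta> (i + k) x))"
proof
  fix x
  show "(\<Sum>i. \<eta> i x) = 1 * (\<Sum>i<k. \<eta> i x) + 1 * (\<Sum>i. \<eta> (i + k) x)"
    using suminf_split_initial_segment[OF summable_seminorms_le[OF assms, of 0 x], of k] by simp
qed

lemma schwartz_suminf:
  assumes schwartz: "\<And>i. \<eta> i \<in> schwartz" and bound: "\<And>i. seminorms_le (n + i) (\<eta> i) (c * (1/2) ^ i)"
  shows "(\<lambda>x. \<Sum>i. \<eta> i x) \<in> schwartz"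
  unfolding schwartz_iff_seminorms_le
proof (intro conjI allI)
  have smooth: "\<And>i. smooth (\<eta> i)" using schwartz unfolding schwartz_def by blast
  then show "smooth (\<lambda>x. \<Sum>i. \<eta> i x)" using bound by (rule smooth_suminf)
  fix N
  have tail_bound: "seminorms_le (N + i) (\<eta> (i + N)) (c * (1/2) ^ N * (1/2) ^ i)" for i
    using bound[of "i + N"] by (rule seminorms_le_mono) (auto simp: power_add mult.commute mult.left_commute)
  have head: "(\<lambda>x. \<Sum>i<N. \<eta> i x) \<in> schwartz" using schwartz by (intro schwartz_sum)
  then obtain M where "seminorms_le N (\<lambda>x. \<Sum>i<N. \<eta> i x) M" and "smooth (\<lambda>x. \<Sum>i<N. \<eta> i x)"
    unfolding schwartz_iff_seminorms_le by blast
  then show "\<exists>M. seminorms_le N (\<lambda>x. \<Sum>i. \<eta> i x) M"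
    unfolding suminf_fun_split_initial_segment[OF bound, of N]
    using seminorms_le_lincomb smooth_suminf[OF smooth tail_bound] seminorms_le_suminf[OF smooth tail_bound]
    by blast
qed

section \<open>The uniform boundedness principle\<close>

definition equicontinuous :: "distr set \<Rightarrow> bool" where
  "equicontinuous F \<longleftrightarrow> (\<exists>C N. \<forall>\<mu>\<in>F. \<forall>\<phi>\<in>schwartz. \<forall>M. seminorms_le N \<phi> M \<longrightarrow> \<bar>\<mu> \<phi>\<bar> \<le> C * M)"

lemma tempered_iff_equicontinuous:
  "tempered \<mu> \<longleftrightarrow>
     (\<forall>\<phi>\<in>schwartz. \<forall>\<psi>\<in>schwartz. \<forall>a b. \<mu> (\<lambda>x. a * \<phi> x + b * \<psi> x) = a * \<mu> \<phi> + b * \<mu> \<psi>) \<and>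
     equicontinuous {\<mu>}"
  unfolding tempered_def equicontinuous_def seminorms_le_def by blast

lemma tempered_lincomb:
  "tempered \<mu> \<Longrightarrow> \<phi> \<in> schwartz \<Longrightarrow> \<psi> \<in> schwartz \<Longrightarrow> \<mu> (\<lambda>x. a * \<phi> x + b * \<psi> x) = a * \<mu> \<phi> + b * \<mu> \<psi>"
  unfolding tempered_def by blast

lemma equicontinuousE:
  assumes "equicontinuous F"
  obtains C N where "0 \<le> C"
    and "\<And>\<mu> \<phi> M. \<mu> \<in> F \<Longrightarrow> \<phi> \<in> schwartz \<Longrightarrow> seminorms_le N \<phi> M \<Longrightarrow> \<bar>\<mu> \<phi>\<bar> \<le> C * M"
proof -
  obtain C N where C: "\<forall>\<mu>\<in>F. \<forall>\<phi>\<in>schwartz. \<forall>M. seminorms_le N \<phi> M \<longrightarrow> \<bar>\<mu> \<phi>\<bar> \<le> C * M"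
    using assms unfolding equicontinuous_def by blast
  have "C * M \<le> max C 0 * M" if "seminorms_le N \<phi> M" for \<phi> M
    using seminorms_le_nonneg[OF that] by (intro mult_right_mono) auto
  with C show thesis by (intro that[of "max C 0" N]) force+
qed

lemma tempered_transl:
  assumes "tempered \<mu>"
  shows "tempered (transl a \<mu>)"
  unfolding tempered_iff_equicontinuous
proof
  show "\<forall>\<phi>\<in>schwartz. \<forall>\<psi>\<in>schwartz. \<forall>c d. transl a \<mu> (\<lambda>x. c * \<phi> x + d * \<psi> x) = c * transl a \<mu> \<phi> + d * transl a \<mu> \<psi>"
    using tempered_lincomb[OF assms schwartz_transl schwartz_transl]
    by (simp add: transl_def transl_fun_def)
  have "equicontinuous {\<mu>}" using assms unfolding tempered_iff_equicontinuous by blast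
  then obtain C N where C: "\<And>\<phi> M. \<phi> \<in> schwartz \<Longrightarrow> seminorms_le N \<phi> M \<Longrightarrow> \<bar>\<mu> \<phi>\<bar> \<le> C * M"
    by (metis equicontinuousE singletonI)
  have "\<bar>transl a \<mu> \<phi>\<bar> \<le> (C * (1 + \<bar>a\<bar>) ^ N) * M" if "\<phi> \<in> schwartz" "seminorms_le N \<phi> M" for \<phi> M
    using C[OF schwartz_transl seminorms_le_transl[OF _ that(2) order_refl]] that
    unfolding transl_def schwartz_def by (simp add: mult.assoc)
  then show "equicontinuous {transl a \<mu>}" unfolding equicontinuous_def by blast
qed

lemma not_equicontinuous_large_value:
  assumes tempered: "\<And>\<mu>. \<mu> \<in> F \<Longrightarrow> tempered \<mu>" and "\<not> equicontinuous F" and "0 < a"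
  shows "\<exists>\<mu>\<in>F. \<exists>\<eta>\<in>schwartz. seminorms_le N \<eta> a \<and> c < \<bar>\<mu> \<eta>\<bar>"
proof -
  obtain \<mu> \<phi> M where \<mu>: "\<mu> \<in> F" and \<phi>: "\<phi> \<in> schwartz" and M: "seminorms_le N \<phi> M"
    and large: "c / a * M < \<bar>\<mu> \<phi>\<bar>"
    using assms(2) unfolding equicontinuous_def by (meson not_le)
  have "M \<noteq> 0"
  proof
    assume "M = 0"
    then have "\<phi> = (\<lambda>x. 0 * \<phi> x + 0 * \<phi> x)" using seminorms_le_0_imp_zero M by simp
    then show False
      using large \<open>M = 0\<close> tempered_lincomb[OF tempered[OF \<mu>] \<phi> \<phi>, of 0 0] by simp
  qed
  then have "0 < M" using seminorms_le_nonneg[OF M] by simp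
  define \<eta> where "\<eta> = (\<lambda>x. a / M * \<phi> x + 0 * \<phi> x)"
  have "\<eta> \<in> schwartz" unfolding \<eta>_def using schwartz_lincomb[OF \<phi> \<phi>] .
  moreover have "seminorms_le N \<eta> a"
    using seminorms_le_lincomb[OF _ _ M M, of "a / M" 0] \<phi> \<open>0 < M\<close> \<open>0 < a\<close>
    unfolding \<eta>_def schwartz_def by simp
  moreover have "c < \<bar>\<mu> \<eta>\<bar>"
  proof -
    have "\<mu> \<eta> = a / M * \<mu> \<phi>"
      using tempered_lincomb[OF tempered[OF \<mu>] \<phi> \<phi>, of "a / M" 0] unfolding \<eta>_def by simp
    then have "\<bar>\<mu> \<eta>\<bar> = a / M * \<bar>\<mu> \<phi>\<bar>"
      using \<open>0 < M\<close> \<open>0 < a\<close> by (simp add: abs_mult)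
    moreover have "a / M * (c / a * M) < a / M * \<bar>\<mu> \<phi>\<bar>"
      using large \<open>0 < M\<close> \<open>0 < a\<close> by (intro mult_strict_left_mono) auto
    ultimately show ?thesis using \<open>0 < M\<close> \<open>0 < a\<close> by simp
  qed
  ultimately show ?thesis using \<mu> by blast
qed

lemma gliding_hump_sequence:
  fixes C :: "distr \<Rightarrow> real" and N :: "distr \<Rightarrow> nat"
  assumes C_nonneg: "\<And>\<mu>. \<mu> \<in> F \<Longrightarrow> 0 \<le> C \<mu>"
    and large: "\<And>s n a c. s \<in> schwartz \<Longrightarrow> 0 < a \<Longrightarrow>
                  \<exists>\<mu>\<in>F. \<exists>\<eta>\<in>schwartz. seminorms_le n \<eta> a \<and> \<bar>\<mu> s\<bar> + c \<le> \<bar>\<mu> \<eta>\<bar>"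
  obtains \<eta> \<mu> where "\<And>k. \<mu> k \<in> F" and "\<And>k. \<eta> k \<in> schwartz"
    and "\<And>k. seminorms_le (k + (\<Sum>j<k. N (\<mu> j))) (\<eta> k) ((1/2) ^ k / (1 + (\<Sum>j<k. C (\<mu> j))))"
    and "\<And>k. \<bar>\<mu> k (\<lambda>x. \<Sum>j<k. \<eta> j x)\<bar> + k + 1 \<le> \<bar>\<mu> k (\<eta> k)\<bar>"
proof -
  define P where "P f k r \<longleftrightarrow> snd r \<in> F \<and> fst r \<in> schwartz \<and>
      seminorms_le (k + (\<Sum>j<k. N (snd (f j)))) (fst r) ((1/2) ^ k / (1 + (\<Sum>j<k. C (snd (f j))))) \<and>
      \<bar>snd r (\<lambda>x. \<Sum>j<k. fst (f j) x)\<bar> + k + 1 \<le> \<bar>snd r (fst r)\<bar>"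
    for f :: "nat \<Rightarrow> test \<times> distr" and k r
  have "\<exists>f. \<forall>k. P f k (f k)"
  proof (rule dependent_wellorder_choice)
    fix f g :: "nat \<Rightarrow> test \<times> distr" and k r
    assume "\<And>j. j < k \<Longrightarrow> f j = g j"
    then have "(\<Sum>j<k. N (snd (f j))) = (\<Sum>j<k. N (snd (g j)))"
      and "(\<Sum>j<k. C (snd (f j))) = (\<Sum>j<k. C (snd (g j)))"
      and "(\<lambda>x. \<Sum>j<k. fst (f j) x) = (\<lambda>x. \<Sum>j<k. fst (g j) x)"
      by (auto intro!: sum.cong)
    then show "P f k r = P g k r" unfolding P_def by simp
  next
    fix f :: "nat \<Rightarrow> test \<times> distr" and k
    assume prev: "\<And>j. j < k \<Longrightarrow> P f j (f j)"
    have "0 \<le> (\<Sum>j<k. C (snd (f j)))"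
      using prev C_nonneg unfolding P_def by (intro sum_nonneg) simp
    then have "0 < (1/2::real) ^ k / (1 + (\<Sum>j<k. C (snd (f j))))" by simp
    moreover have "(\<lambda>x. \<Sum>j<k. fst (f j) x) \<in> schwartz"
      using prev unfolding P_def by (intro schwartz_sum) simp
    ultimately obtain \<mu> \<eta> where "\<mu> \<in> F" "\<eta> \<in> schwartz"
      "seminorms_le (k + (\<Sum>j<k. N (snd (f j)))) \<eta> ((1/2) ^ k / (1 + (\<Sum>j<k. C (snd (f j)))))"
      "\<bar>\<mu> (\<lambda>x. \<Sum>j<k. fst (f j) x)\<bar> + (k + 1) \<le> \<bar>\<mu> \<eta>\<bar>"
      using large by blast
    then have "P f k (\<eta>, \<mu>)" unfolding P_def by (simp add: add.assoc)
    then show "\<exists>r. P f k r" by blast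
  qed
  then obtain f where "\<And>k. P f k (f k)" by blast
  then show thesis by (intro that[of "\<lambda>k. snd (f k)" "\<lambda>k. fst (f k)"]) (simp_all add: P_def)
qed

text \<open>Each hump \<open>\<eta> k\<close> dominates, under \<open>\<mu> k\<close>, the sum of the earlier humps, while the later humps
  are so small in the seminorms controlling \<open>\<mu> k\<close> that their sum changes the value of \<open>\<mu> k\<close> by at
  most 1. Hence \<open>\<mu> k\<close> is at least \<open>k\<close> on the sum of all humps.\<close>

locale gliding_hump =
  fixes \<mu> :: "nat \<Rightarrow> distr" and \<eta> :: "nat \<Rightarrow> test" and C :: "distr \<Rightarrow> real" and N :: "distr \<Rightarrow> nat"
  assumes tempered: "\<And>k. tempered (\<mu> k)"
    and bound: "\<And>k \<phi> M. \<phi> \<in> schwartz \<Longrightarrow> seminorms_le (N (\<mu> k)) \<phi> M \<Longrightarrow> \<bar>\<mu> k \<phi>\<bar> \<le> C (\<mu> k) * M"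
    and C_nonneg: "\<And>k. 0 \<le> C (\<mu> k)"
    and hump_schwartz: "\<And>k. \<eta> k \<in> schwartz"
    and hump_small: "\<And>k. seminorms_le (k + (\<Sum>j<k. N (\<mu> j))) (\<eta> k) ((1/2) ^ k / (1 + (\<Sum>j<k. C (\<mu> j))))"
    and hump_large: "\<And>k. \<bar>\<mu> k (\<lambda>x. \<Sum>j<k. \<eta> j x)\<bar> + k + 1 \<le> \<bar>\<mu> k (\<eta> k)\<bar>"
begin

lemma hump_smooth: "smooth (\<eta> k)"
  using hump_schwartz unfolding schwartz_def by blast

lemma hump_decay: "seminorms_le (0 + k) (\<eta> k) (1 * (1/2) ^ k)"
proof (rule seminorms_le_mono[OF hump_small])
  have "0 \<le> (\<Sum>j<k. C (\<mu> j))" by (intro sum_nonneg C_nonneg)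
  then show "(1/2) ^ k / (1 + (\<Sum>j<k. C (\<mu> j))) \<le> 1 * (1/2::real) ^ k"
    by (simp add: divide_le_eq mult_le_cancel_left1)
qed simp

lemma sum_humps_schwartz: "(\<lambda>x. \<Sum>i. \<eta> i x) \<in> schwartz"
  using hump_schwartz hump_decay by (rule schwartz_suminf)

lemma later_hump_small:
  "seminorms_le (N (\<mu> k) + i) (\<eta> (i + Suc k)) ((1/2) ^ Suc k / (1 + C (\<mu> k)) * (1/2) ^ i)"
proof (rule seminorms_le_mono[OF hump_small])
  have "N (\<mu> k) \<le> (\<Sum>j<i + Suc k. N (\<mu> j))" by (intro member_le_sum) auto
  then show "N (\<mu> k) + i \<le> i + Suc k + (\<Sum>j<i + Suc k. N (\<mu> j))" by simp
  have "C (\<mu> k) \<le> (\<Sum>j<i + Suc k. C (\<mu> j))" using C_nonneg by (intro member_le_sum) auto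
  then have "(1/2) ^ (i + Suc k) / (1 + (\<Sum>j<i + Suc k. C (\<mu> j))) \<le> (1/2) ^ (i + Suc k) / (1 + C (\<mu> k))"
    using C_nonneg[of k] by (intro divide_left_mono) auto
  then show "(1/2) ^ (i + Suc k) / (1 + (\<Sum>j<i + Suc k. C (\<mu> j)))
      \<le> (1/2) ^ Suc k / (1 + C (\<mu> k)) * (1/2) ^ i"
    by (simp add: power_add mult.commute)
qed

lemma
  shows later_humps_schwartz: "(\<lambda>x. \<Sum>i. \<eta> (i + Suc k) x) \<in> schwartz"
    and later_humps_bound: "\<bar>\<mu> k (\<lambda>x. \<Sum>i. \<eta> (i + Suc k) x)\<bar> \<le> 1"
proof -
  show schwartz: "(\<lambda>x. \<Sum>i. \<eta> (i + Suc k) x) \<in> schwartz"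
    using hump_schwartz later_hump_small by (rule schwartz_suminf)
  have "\<bar>\<mu> k (\<lambda>x. \<Sum>i. \<eta> (i + Suc k) x)\<bar> \<le> C (\<mu> k) * (2 * ((1/2) ^ Suc k / (1 + C (\<mu> k))))"
    using bound[OF schwartz seminorms_le_suminf[OF hump_smooth later_hump_small]] .
  also have "\<dots> = C (\<mu> k) / (1 + C (\<mu> k)) * (1/2) ^ k"
    by (simp only: power_Suc times_divide_eq_right times_divide_eq_left)
  also have "\<dots> \<le> 1"
    using C_nonneg[of k] by (intro mult_le_one) (auto simp: power_le_one)
  finally show "\<bar>\<mu> k (\<lambda>x. \<Sum>i. \<eta> (i + Suc k) x)\<bar> \<le> 1" .
qed

lemma sum_humps_large: "real k \<le> \<bar>\<mu> k (\<lambda>x. \<Sum>i. \<eta> i x)\<bar>"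
proof -
  define s where "s = (\<lambda>x. \<Sum>j<k. \<eta> j x)"
  define r where "r = (\<lambda>x. \<Sum>i. \<eta> (i + Suc k) x)"
  have s: "s \<in> schwartz" unfolding s_def using hump_schwartz by (intro schwartz_sum)
  have r: "r \<in> schwartz" unfolding r_def by (rule later_humps_schwartz)
  have split: "(\<lambda>x. \<Sum>i. \<eta> i x) = (\<lambda>x. 1 * (1 * s x + 1 * \<eta> k x) + 1 * r x)"
    unfolding suminf_fun_split_initial_segment[OF hump_decay, of "Suc k"] r_def s_def by simp
  have "\<mu> k (\<lambda>x. \<Sum>i. \<eta> i x) = 1 * (1 * \<mu> k s + 1 * \<mu> k (\<eta> k)) + 1 * \<mu> k r"
    unfolding split
    by (simp only: tempered_lincomb[OF tempered schwartz_lincomb[OF s hump_schwartz] r]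
        tempered_lincomb[OF tempered s hump_schwartz])
  then show ?thesis
    using hump_large[of k] later_humps_bound[of k] unfolding s_def r_def mult_1 by linarith
qed

end

theorem uniform_boundedness:
  assumes tempered: "\<And>\<mu>. \<mu> \<in> F \<Longrightarrow> tempered \<mu>"
    and pointwise_bounded: "\<And>\<phi>. \<phi> \<in> schwartz \<Longrightarrow> \<exists>K. \<forall>\<mu>\<in>F. \<bar>\<mu> \<phi>\<bar> \<le> K"
  shows "equicontinuous F"
proof (rule ccontr)
  assume not_equicontinuous: "\<not> equicontinuous F"
  have "\<exists>C N. 0 \<le> C \<and> (\<forall>\<phi> M. \<phi> \<in> schwartz \<longrightarrow> seminorms_le N \<phi> M \<longrightarrow> \<bar>\<mu> \<phi>\<bar> \<le> C * M)"
    if "\<mu> \<in> F" for \<mu>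
  proof -
    have "equicontinuous {\<mu>}" using tempered[OF that] unfolding tempered_iff_equicontinuous by blast
    then show ?thesis by (rule equicontinuousE) blast
  qed
  then obtain C N where C_nonneg: "\<And>\<mu>. \<mu> \<in> F \<Longrightarrow> 0 \<le> C \<mu>"
    and bound: "\<And>\<mu> \<phi> M. \<mu> \<in> F \<Longrightarrow> \<phi> \<in> schwartz \<Longrightarrow> seminorms_le (N \<mu>) \<phi> M \<Longrightarrow> \<bar>\<mu> \<phi>\<bar> \<le> C \<mu> * M"
    by metis
  have large: "\<exists>\<mu>\<in>F. \<exists>\<eta>\<in>schwartz. seminorms_le n \<eta> a \<and> \<bar>\<mu> s\<bar> + c \<le> \<bar>\<mu> \<eta>\<bar>"
    if s: "s \<in> schwartz" and a: "0 < a" for s n a c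
  proof -
    obtain K where K: "\<forall>\<mu>\<in>F. \<bar>\<mu> s\<bar> \<le> K" using pointwise_bounded[OF s] by blast
    obtain \<mu> \<eta> where "\<mu> \<in> F" "\<eta> \<in> schwartz" "seminorms_le n \<eta> a" "K + c < \<bar>\<mu> \<eta>\<bar>"
      using not_equicontinuous_large_value[OF tempered not_equicontinuous a] by blast
    with K show ?thesis by force
  qed
  obtain \<mu> \<eta> where \<mu>: "\<And>k. \<mu> k \<in> F" and "\<And>k. \<eta> k \<in> schwartz"
    and "\<And>k. seminorms_le (k + (\<Sum>j<k. N (\<mu> j))) (\<eta> k) ((1/2) ^ k / (1 + (\<Sum>j<k. C (\<mu> j))))"
    and "\<And>k. \<bar>\<mu> k (\<lambda>x. \<Sum>j<k. \<eta> j x)\<bar> + k + 1 \<le> \<bar>\<mu> k (\<eta> k)\<bar>"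
    by (rule gliding_hump_sequence[where C = C and N = N and F = F]) (use C_nonneg large that in blast)+
  then have "gliding_hump \<mu> \<eta> C N" using tempered bound C_nonneg by unfold_locales auto
  note hump = gliding_hump.sum_humps_schwartz[OF this] gliding_hump.sum_humps_large[OF this]
  obtain K where "\<forall>\<mu>\<in>F. \<bar>\<mu> (\<lambda>x. \<Sum>i. \<eta> i x)\<bar> \<le> K" using pointwise_bounded[OF hump(1)] by blast
  then have "\<bar>\<mu> (nat \<lceil>K\<rceil> + 1) (\<lambda>x. \<Sum>i. \<eta> i x)\<bar> \<le> K" using \<mu> by blast
  then show False using hump(2)[of "nat \<lceil>K\<rceil> + 1"] by linarith
qed

section \<open>Paths of tempered distributions\<close>

lemma pathsC_equicontinuous:
  assumes "X \<in> pathsC T"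
  shows "equicontinuous (X ` {0..T})"
proof (rule uniform_boundedness)
  show "\<And>\<mu>. \<mu> \<in> X ` {0..T} \<Longrightarrow> tempered \<mu>" using assms unfolding pathsC_def by auto
  fix \<phi> assume "\<phi> \<in> schwartz"
  then have "continuous_on {0..T} (\<lambda>t. X t \<phi>)" using assms unfolding pathsC_def by blast
  then have "bounded ((\<lambda>t. X t \<phi>) ` {0..T})" by (intro compact_imp_bounded compact_continuous_image) auto
  then show "\<exists>K. \<forall>\<mu>\<in>X ` {0..T}. \<bar>\<mu> \<phi>\<bar> \<le> K" unfolding bounded_real by auto
qed

lemma pathsC_transl_diff_le:
  assumes X: "X \<in> pathsC T" and \<phi>: "\<phi> \<in> schwartz"
  obtains L where "\<And>s. s \<in> {0..T} \<Longrightarrow> \<bar>s - t\<bar> \<le> 1 \<Longrightarrow>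
    \<bar>X s (transl_fun s \<phi>) - X s (transl_fun t \<phi>)\<bar> \<le> L * \<bar>s - t\<bar>"
proof -
  obtain C N where bound: "\<And>s \<psi> M. s \<in> {0..T} \<Longrightarrow> \<psi> \<in> schwartz \<Longrightarrow> seminorms_le N \<psi> M \<Longrightarrow> \<bar>X s \<psi>\<bar> \<le> C * M"
    using pathsC_equicontinuous[OF X] by (rule equicontinuousE) blast
  obtain M where M: "seminorms_le (Suc N) \<phi> M" using \<phi> unfolding schwartz_iff_seminorms_le by blast
  have smooth: "smooth \<phi>" using \<phi> unfolding schwartz_def by blast
  have "\<bar>X s (transl_fun s \<phi>) - X s (transl_fun t \<phi>)\<bar> \<le> C * ((2 + \<bar>t\<bar>) ^ N * M) * \<bar>s - t\<bar>"
    if "s \<in> {0..T}" "\<bar>s - t\<bar> \<le> 1" for s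
  proof -
    have "X s (transl_fun s \<phi>) - X s (transl_fun t \<phi>) = X s (\<lambda>x. transl_fun s \<phi> x - transl_fun t \<phi> x)"
      using tempered_lincomb[of "X s" _ _ 1 "- 1"] X \<open>s \<in> {0..T}\<close> schwartz_transl[OF \<phi>]
      unfolding pathsC_def by simp
    also have "\<bar>\<dots>\<bar> \<le> C * (\<bar>s - t\<bar> * ((2 + \<bar>t\<bar>) ^ N * M))"
      using that schwartz_lincomb[OF schwartz_transl[OF \<phi>] schwartz_transl[OF \<phi>], of 1 s "- 1" t]
      by (intro bound seminorms_le_transl_diff[OF smooth M]) auto
    finally show ?thesis by (simp add: algebra_simps)
  qed
  then show thesis by (rule that)
qed

lemma pathsC_continuous_transl:
  assumes X: "X \<in> pathsC T" and \<phi>: "\<phi> \<in> schwartz"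
  shows "continuous_on {0..T} (\<lambda>t. X t (transl_fun t \<phi>))"
  unfolding continuous_on_def
proof
  fix t assume t: "t \<in> {0..T}"
  obtain L where L: "\<And>s. s \<in> {0..T} \<Longrightarrow> \<bar>s - t\<bar> \<le> 1 \<Longrightarrow>
      \<bar>X s (transl_fun s \<phi>) - X s (transl_fun t \<phi>)\<bar> \<le> L * \<bar>s - t\<bar>"
    using pathsC_transl_diff_le[OF X \<phi>] by blast
  have "((\<lambda>s. X s (transl_fun t \<phi>)) \<longlongrightarrow> X t (transl_fun t \<phi>)) (at t within {0..T})"
    using X schwartz_transl[OF \<phi>] t unfolding pathsC_def continuous_on_def by blast
  moreover have "((\<lambda>s. X s (transl_fun s \<phi>) - X s (transl_fun t \<phi>)) \<longlongrightarrow> 0) (at t within {0..T})"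
  proof (rule Lim_null_comparison)
    show "\<forall>\<^sub>F s in at t within {0..T}. norm (X s (transl_fun s \<phi>) - X s (transl_fun t \<phi>)) \<le> L * \<bar>s - t\<bar>"
      unfolding eventually_at by (intro exI[of _ 1]) (auto simp: dist_real_def intro: L)
    show "((\<lambda>s. L * \<bar>s - t\<bar>) \<longlongrightarrow> 0) (at t within {0..T})"
      by (intro tendsto_mult_right_zero tendsto_rabs_zero LIM_zero tendsto_ident_at)
  qed
  ultimately have "((\<lambda>s. X s (transl_fun t \<phi>) + (X s (transl_fun s \<phi>) - X s (transl_fun t \<phi>)))
      \<longlongrightarrow> X t (transl_fun t \<phi>) + 0) (at t within {0..T})"
    by (rule tendsto_add)
  then show "((\<lambda>s. X s (transl_fun s \<phi>)) \<longlongrightarrow> X t (transl_fun t \<phi>)) (at t within {0..T})" by simp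
qed

lemma Gmap_pathsC:
  assumes "X \<in> pathsC T"
  shows "Gmap X \<in> pathsC T"
proof -
  have "tempered (Gmap X t)" if "t \<in> {0..T}" for t
    using assms that tempered_transl unfolding pathsC_def Gmap_def by blast
  moreover have "continuous_on {0..T} (\<lambda>t. Gmap X t \<phi>)" if "\<phi> \<in> schwartz" for \<phi>
    using pathsC_continuous_transl[OF assms that] unfolding Gmap_def transl_def .
  ultimately show ?thesis unfolding pathsC_def by blast
qed

definition pathballs :: "real \<Rightarrow> (real \<Rightarrow> distr) set set" where
  "pathballs T = {pathball T X B \<epsilon> | X B \<epsilon>. X \<in> pathsC T \<and> schwartz_bounded B \<and> \<epsilon> > 0}"

lemma Union_pathballs: "\<Union>(pathballs T) = pathsC T"
proof
  show "\<Union>(pathballs T) \<subseteq> pathsC T"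
  proof
    fix Y assume "Y \<in> \<Union>(pathballs T)"
    then obtain X B \<epsilon> where "Y \<in> pathball T X B \<epsilon>" unfolding pathballs_def by blast
    then show "Y \<in> pathsC T" unfolding pathball_def by blast
  qed
  show "pathsC T \<subseteq> \<Union>(pathballs T)"
  proof
    fix X assume X: "X \<in> pathsC T"
    have "schwartz_bounded {}" unfolding schwartz_bounded_def by simp
    then have "pathball T X {} 1 \<in> pathballs T"
      unfolding pathballs_def using X by (intro CollectI exI[of _ X] exI[of _ "{}"] exI[of _ "1::real"]) simp
    moreover have "X \<in> pathball T X {} 1" using X unfolding pathball_def by (simp add: lt_ex)
    ultimately show "X \<in> \<Union>(pathballs T)" by blast
  qed
qed

lemma continuous_map_topology_generated_by:
  assumes "f ` \<Union>S \<subseteq> \<Union>S'" and "\<And>U y. U \<in> S' \<Longrightarrow> y \<in> \<Union>S \<Longrightarrow> f y \<in> U \<Longrightarrow> \<exists>V\<in>S. y \<in> V \<and> f ` V \<subseteq> U"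
  shows "continuous_map (topology_generated_by S) (topology_generated_by S') f"
proof (rule continuous_on_generated_topo)
  show "f ` topspace (topology_generated_by S) \<subseteq> \<Union>S'" using assms(1) by simp
  fix U assume "U \<in> S'"
  show "openin (topology_generated_by S) (f -` U \<inter> topspace (topology_generated_by S))"
  proof (subst openin_subopen, intro ballI)
    fix y assume "y \<in> f -` U \<inter> topspace (topology_generated_by S)"
    then obtain V where "V \<in> S" "y \<in> V" "f ` V \<subseteq> U" using assms(2)[OF \<open>U \<in> S'\<close>] by auto
    then show "\<exists>W. openin (topology_generated_by S) W \<and> y \<in> W \<and> W \<subseteq> f -` U \<inter> topspace (topology_generated_by S)"
      by (intro exI[of _ V]) (auto intro: topology_generated_by_Basis)
  qed
qed

lemma Gmap_pathball_neighbourhood: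
  assumes U: "U \<in> pathballs T" and Y: "Y \<in> pathsC T" and GY: "Gmap Y \<in> U"
  shows "\<exists>V\<in>pathballs T. Y \<in> V \<and> Gmap ` V \<subseteq> U"
proof -
  obtain X B \<epsilon> where B: "schwartz_bounded B" and U_eq: "U = pathball T X B \<epsilon>"
    using U unfolding pathballs_def by blast
  then obtain e where "e < \<epsilon>" and e: "\<forall>t\<in>{0..T}. \<forall>\<phi>\<in>B. \<bar>Gmap Y t \<phi> - X t \<phi>\<bar> \<le> e"
    using GY unfolding pathball_def by blast
  define B' where "B' = (\<Union>t\<in>{0..T}. transl_fun t ` B)"
  have "schwartz_bounded B'" unfolding B'_def by (rule schwartz_bounded_transl[OF bounded_closed_interval B])
  then have "pathball T Y B' (\<epsilon> - e) \<in> pathballs T"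
    using Y \<open>e < \<epsilon>\<close> unfolding pathballs_def
    by (intro CollectI exI[of _ Y] exI[of _ B'] exI[of _ "\<epsilon> - e"]) simp
  moreover have "Y \<in> pathball T Y B' (\<epsilon> - e)"
    using Y \<open>e < \<epsilon>\<close> unfolding pathball_def by (auto intro!: exI[of _ 0])
  moreover have "Gmap ` pathball T Y B' (\<epsilon> - e) \<subseteq> U"
  proof
    fix G assume "G \<in> Gmap ` pathball T Y B' (\<epsilon> - e)"
    then obtain Z e' where Z: "Z \<in> pathsC T" "G = Gmap Z" "e' < \<epsilon> - e"
      and e': "\<forall>t\<in>{0..T}. \<forall>\<psi>\<in>B'. \<bar>Z t \<psi> - Y t \<psi>\<bar> \<le> e'"
      unfolding pathball_def by blast
    have "\<bar>Gmap Z t \<phi> - X t \<phi>\<bar> \<le> e' + e" if "t \<in> {0..T}" "\<phi> \<in> B" for t \<phi>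
    proof -
      have "\<bar>Z t (transl_fun t \<phi>) - Y t (transl_fun t \<phi>)\<bar> \<le> e'" using e' that unfolding B'_def by blast
      moreover have "\<bar>Y t (transl_fun t \<phi>) - X t \<phi>\<bar> \<le> e" using e that unfolding Gmap_def transl_def by blast
      ultimately show ?thesis unfolding Gmap_def transl_def by linarith
    qed
    then show "G \<in> U"
      using Gmap_pathsC[OF Z(1)] Z(2,3) unfolding U_eq pathball_def by (auto intro!: exI[of _ "e' + e"])
  qed
  ultimately show ?thesis by blast
qed

theorem proposition3:
  fixes T :: real
  assumes "T > 0"
  shows "Gmap \<in> pathsC T \<rightarrow> pathsC T \<and>
         continuous_map (pathsC_topology T) (pathsC_topology T) Gmap"
proof
  show "Gmap \<in> pathsC T \<rightarrow> pathsC T" using Gmap_pathsC by blast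
  show "continuous_map (pathsC_topology T) (pathsC_topology T) Gmap"
    unfolding pathsC_topology_def pathballs_def[symmetric]
    using Gmap_pathsC Gmap_pathball_neighbourhood
    by (intro continuous_map_topology_generated_by) (auto simp: Union_pathballs)
qed

end
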